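(* Let $\mathcal{A}\subseteq\mathbb{R}^{m}$ be a nonempty set, let $C:\mathcal{A}\to\mathbb{R}$ be a base objective, and define $E:\mathcal{A}\to[0,\infty)$ by $E(a)=\|\hat{\theta}^k_{t+1}(a)-\theta^k\|^2$ where $\hat{\theta}^k_{t+1}(a)=h^{-k}_\ell(\hat{\theta}^k_t,\hat{\theta}^{-k}_t,a,s_t)$ for an arbitrary map $h^{-k}_\ell$ and fixed $\hat{\theta}^k_t,\hat{\theta}^{-k}_t,s_t,\theta^k$. For $\eta\ge0$ let $\Phi^{\eta}=C+\eta E$. Assume the relevant minima are attained (i.e., $\arg\min_{\mathcal{A}}C$, $\arg\min_{\mathcal{A}}E$ and $\arg\min_{\mathcal{A}}\Phi^\eta$ for the $\eta$ considered are nonempty, and $E$ attains its minimum on $\arg\min_{\mathcal{A}}C$). Let $a^{0}\in\arg\min_{\mathcal{A}}C$ be any minimizer, and for $\eta\ge0$ let $a^{\eta}\in\arg\min_{\mathcal{A}}\Phi^{\eta}$ be any minimizer. Then: (i) for every $\eta>0$, $E(a^{\eta})\le E(a^{0})$; (ii) if $\arg\min_{\mathcal{A}}C\cap\arg\min_{\mathcal{A}}E=\varnothing$, then there exists $\eta^\star>0$ such that for all $\eta>\eta^\star$, $E(a^{\eta})<E(a^{0})$. *)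

theory Defs
  imports "HOL-Analysis.Analysis"
begin

definition argmin_on :: "'a set \<Rightarrow> ('a \<Rightarrow> real) \<Rightarrow> 'a set" where
  "argmin_on A f = {a \<in> A. \<forall>b\<in>A. f a \<le> f b}"

definition E_obj :: "('p \<Rightarrow> 'q \<Rightarrow> 'a \<Rightarrow> 's \<Rightarrow> real ^ 'n) \<Rightarrow> 'p \<Rightarrow> 'q \<Rightarrow> 's \<Rightarrow> real ^ 'n
    \<Rightarrow> 'a \<Rightarrow> real" where
  "E_obj h thk thmk s theta a = (norm (h thk thmk a s - theta))\<^sup>2"

definition Phi :: "('a \<Rightarrow> real) \<Rightarrow> ('a \<Rightarrow> real) \<Rightarrow> real \<Rightarrow> 'a \<Rightarrow> real" where
  "Phi C E eta a = C a + eta * E a"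

end

theory Submission
  imports Defs
begin

text \<open>
  Comparing a minimizer \<open>a\<close> of \<open>C + \<eta> E\<close> with a minimizer \<open>a\<^sup>0\<close> of \<open>C\<close> gives
  \<open>\<eta> E(a) \<le> \<eta> E(a\<^sup>0) + (C(a\<^sup>0) - C(a)) \<le> \<eta> E(a\<^sup>0)\<close>. Comparing it instead with a minimizer
  \<open>b\<close> of \<open>E\<close> gives \<open>\<eta> (E(a) - E(b)) \<le> C(b) - C(a\<^sup>0)\<close>; if no minimizer of \<open>C\<close> minimizes \<open>E\<close>,
  then \<open>E(b) < E(a\<^sup>0)\<close>, and the right-hand side is below \<open>\<eta> (E(a\<^sup>0) - E(b))\<close> as soon as
  \<open>\<eta> > (C(b) - C(a\<^sup>0)) / (E(a\<^sup>0) - E(b))\<close>.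
\<close>

lemma argmin_onD:
  assumes "a \<in> argmin_on A f"
  shows "a \<in> A" and "\<And>b. b \<in> A \<Longrightarrow> f a \<le> f b"
  using assms by (auto simp: argmin_on_def)

lemma argmin_on_less_not_argmin:
  assumes "b \<in> argmin_on A f" and "a \<in> A" and "a \<notin> argmin_on A f"
  shows "f b < f a"
  using assms by (force simp: argmin_on_def)

lemma argmin_on_Phi_le:
  assumes a0: "a0 \<in> argmin_on A C"
    and a: "a \<in> argmin_on A (Phi C E eta)" and "eta > 0"
  shows "E a \<le> E a0"
proof -
  have "C a + eta * E a \<le> C a0 + eta * E a0"
    using argmin_onD[OF a] argmin_onD(1)[OF a0] by (auto simp: Phi_def)
  moreover have "C a0 \<le> C a"
    using argmin_onD(2)[OF a0] argmin_onD(1)[OF a] .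
  ultimately have "eta * E a \<le> eta * E a0" by linarith
  then show ?thesis using \<open>eta > 0\<close> by simp
qed

lemma argmin_on_Phi_less:
  assumes a0: "a0 \<in> argmin_on A C" and b: "b \<in> argmin_on A E"
    and gap: "E b < E a0"
    and eta: "eta > (C b - C a0) / (E a0 - E b)"
    and a: "a \<in> argmin_on A (Phi C E eta)"
  shows "E a < E a0"
proof -
  have "C a + eta * E a \<le> C b + eta * E b"
    using argmin_onD[OF a] argmin_onD(1)[OF b] by (auto simp: Phi_def)
  moreover have "C a0 \<le> C a"
    using argmin_onD(2)[OF a0] argmin_onD(1)[OF a] .
  ultimately have "eta * (E a - E b) \<le> C b - C a0"
    by (simp add: algebra_simps)
  also have "\<dots> < eta * (E a0 - E b)"
    using eta gap by (simp add: pos_divide_less_eq)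
  finally have "eta * (E a - E b) < eta * (E a0 - E b)" .
  moreover have "C a0 \<le> C b"
    using argmin_onD(2)[OF a0] argmin_onD(1)[OF b] .
  then have "(C b - C a0) / (E a0 - E b) \<ge> 0"
    using gap by simp
  then have "eta > 0"
    using eta by linarith
  ultimately show ?thesis by simp
qed

lemma argmin_on_Phi_eventually_less:
  assumes a0: "a0 \<in> argmin_on A C" and "argmin_on A E \<noteq> {}"
    and disjoint: "argmin_on A C \<inter> argmin_on A E = {}"
  shows "\<exists>eta_star>0. \<forall>eta>eta_star. \<forall>a \<in> argmin_on A (Phi C E eta). E a < E a0"
proof -
  obtain b where b: "b \<in> argmin_on A E"
    using \<open>argmin_on A E \<noteq> {}\<close> by blast
  have gap: "E b < E a0"
    using argmin_on_less_not_argmin[OF b argmin_onD(1)[OF a0]] a0 disjoint by blast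
  have "C a0 \<le> C b"
    using argmin_onD(2)[OF a0] argmin_onD(1)[OF b] .
  then have threshold_nonneg: "(C b - C a0) / (E a0 - E b) \<ge> 0"
    using gap by simp
  show ?thesis
  proof (intro exI[of _ "(C b - C a0) / (E a0 - E b) + 1"] conjI allI impI ballI)
    show "(C b - C a0) / (E a0 - E b) + 1 > 0"
      using threshold_nonneg by linarith
    fix eta a
    assume "eta > (C b - C a0) / (E a0 - E b) + 1" and a: "a \<in> argmin_on A (Phi C E eta)"
    then have "eta > (C b - C a0) / (E a0 - E b)"
      by linarith
    then show "E a < E a0"
      using argmin_on_Phi_less[OF a0 b gap _ a] by blast
  qed
qed

theorem corollary3p3:
  fixes A :: "(real ^ 'm) set"
    and C :: "real ^ 'm \<Rightarrow> real"
    and h :: "real ^ 'n \<Rightarrow> 'q \<Rightarrow> real ^ 'm \<Rightarrow> 's \<Rightarrow> real ^ 'n"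
    and thk :: "real ^ 'n" and thmk :: 'q and s :: 's and theta :: "real ^ 'n"
    and a0 :: "real ^ 'm"
  assumes "A \<noteq> {}"
    and "argmin_on A C \<noteq> {}"
    and "argmin_on A (E_obj h thk thmk s theta) \<noteq> {}"
    and "\<forall>eta\<ge>0. argmin_on A (Phi C (E_obj h thk thmk s theta) eta) \<noteq> {}"
    and "argmin_on (argmin_on A C) (E_obj h thk thmk s theta) \<noteq> {}"
    and "a0 \<in> argmin_on A C"
  shows "(\<forall>eta>0. \<forall>a \<in> argmin_on A (Phi C (E_obj h thk thmk s theta) eta).
            E_obj h thk thmk s theta a \<le> E_obj h thk thmk s theta a0)
       \<and> (argmin_on A C \<inter> argmin_on A (E_obj h thk thmk s theta) = {} \<longrightarrow>
            (\<exists>eta_star>0. \<forall>eta>eta_star.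
               \<forall>a \<in> argmin_on A (Phi C (E_obj h thk thmk s theta) eta).
                 E_obj h thk thmk s theta a < E_obj h thk thmk s theta a0))"
  using argmin_on_Phi_le[OF assms(6)]
    argmin_on_Phi_eventually_less[OF assms(6) assms(3)]
  by blast

end
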